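(* Let $\mathcal C$ be a category with a class of cofibrations and a class of fibrations such that every map from a cofibrant object to a fibrant object factors both as a cofibration followed by an acyclic fibration and as an acyclic cofibration followed by a fibration, and such that every cofibration from a cofibrant object to a fibrant object admits a relative strong cylinder object. The following conditions are equivalent: (i) $\mathcal C$ is a weak model category, i.e. any fibration from a cofibrant object to a fibrant object admits a relative strong path object; (ii) if $A\overset{i}{\hookrightarrow}B\overset{j}{\hookrightarrow}C$ are two cofibrations between bifibrant objects such that $i$ and $j\circ i$ are acyclic, then $j$ is acyclic; (iii) there is a class $\mathcal J$ of acyclic cofibrations such that any map from a cofibrant object to a fibrant object factors as a map in $\mathcal J$ followed by a fibration, and condition (ii) holds when we further assume $i\in\mathcal J$.
   Context: A class of cofibrations: a class of maps with a cofibrant initial object $0$ ($X$ cofibrant iff $0\to X$ is a cofibration), containing isomorphisms with cofibrant domain, closed under composition, and such that pushouts of a cofibration $A\to B$ along $A\to C$ with $A,C$ cofibrant exist and $C\to C\sqcup_AB$ is a cofibration; a class of fibrations is the dual notion. Bifibrant = fibrant and cofibrant. Acyclic fibration: fibration with the right lifting property against all cofibrations between cofibrant objects; acyclic cofibration: cofibration with the left lifting property against all fibrations between fibrant objects. A relative strong cylinder object for a cofibration $A\to B$ is a factorization $B\sqcup_AB\to I_AB\to B$ of the codiagonal whose first map is a cofibration and whose restriction along the first inclusion of $B$ is an acyclic cofibration. A relative strong path object for a fibration $Y\to X$ is a factorization $Y\to P_XY\to Y\times_XY$ of the diagonal whose second map is a fibration and whose composite with the first projection is an acyclic fibration. A weak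 model category is a category with these classes satisfying the factorization condition, having relative strong cylinder objects for cofibrations from cofibrant to fibrant objects, and relative strong path objects for fibrations from cofibrant to fibrant objects. *)

theory Defs
  imports Main
begin

record ('o, 'm) cat =
  obj :: "'o set"
  arr :: "'m set"
  src :: "'m \<Rightarrow> 'o"
  tgt :: "'m \<Rightarrow> 'o"
  ident :: "'o \<Rightarrow> 'm"
  cmp :: "'m \<Rightarrow> 'm \<Rightarrow> 'm"   (* cmp C g f = g \<circ> f *)

definition hom :: "('o, 'm) cat \<Rightarrow> 'o \<Rightarrow> 'o \<Rightarrow> 'm set" where
  "hom C X Y = {f \<in> arr C. src C f = X \<and> tgt C f = Y}"

definition is_category :: "('o, 'm) cat \<Rightarrow> bool" where
  "is_category C \<longleftrightarrow>
     (\<forall>f\<in>arr C. src C f \<in> obj C \<and> tgt C f \<in> obj C) \<and>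
     (\<forall>X\<in>obj C. ident C X \<in> hom C X X) \<and>
     (\<forall>f\<in>arr C. \<forall>g\<in>arr C. tgt C f = src C g \<longrightarrow>
         cmp C g f \<in> hom C (src C f) (tgt C g)) \<and>
     (\<forall>f\<in>arr C. cmp C (ident C (tgt C f)) f = f \<and> cmp C f (ident C (src C f)) = f) \<and>
     (\<forall>f\<in>arr C. \<forall>g\<in>arr C. \<forall>h\<in>arr C. tgt C f = src C g \<and> tgt C g = src C h \<longrightarrow>
         cmp C h (cmp C g f) = cmp C (cmp C h g) f)"

definition iso :: "('o, 'm) cat \<Rightarrow> 'm \<Rightarrow> bool" where
  "iso C f \<longleftrightarrow> f \<in> arr C \<and>
     (\<exists>g\<in>hom C (tgt C f) (src C f).
        cmp C g f = ident C (src C f) \<and> cmp C f g = ident C (tgt C f))"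

definition initial :: "('o, 'm) cat \<Rightarrow> 'o \<Rightarrow> bool" where
  "initial C z \<longleftrightarrow> z \<in> obj C \<and> (\<forall>X\<in>obj C. \<exists>!f. f \<in> hom C z X)"

definition terminal :: "('o, 'm) cat \<Rightarrow> 'o \<Rightarrow> bool" where
  "terminal C t \<longleftrightarrow> t \<in> obj C \<and> (\<forall>X\<in>obj C. \<exists>!f. f \<in> hom C X t)"

text \<open>Pushout square: f : A \<rightarrow> B, g : A \<rightarrow> D, f' : D \<rightarrow> P (parallel to f),
  g' : B \<rightarrow> P (parallel to g), with g' f = f' g, universal.\<close>
definition is_pushout :: "('o, 'm) cat \<Rightarrow> 'm \<Rightarrow> 'm \<Rightarrow> 'm \<Rightarrow> 'm \<Rightarrow> bool" where
  "is_pushout C f g f' g' \<longleftrightarrow>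
     f \<in> arr C \<and> g \<in> arr C \<and> src C f = src C g \<and>
     f' \<in> hom C (tgt C g) (tgt C f') \<and> g' \<in> hom C (tgt C f) (tgt C f') \<and>
     cmp C g' f = cmp C f' g \<and>
     (\<forall>Q u v. u \<in> hom C (tgt C f) Q \<and> v \<in> hom C (tgt C g) Q \<and> cmp C u f = cmp C v g \<longrightarrow>
        (\<exists>!h. h \<in> hom C (tgt C f') Q \<and> cmp C h g' = u \<and> cmp C h f' = v))"

text \<open>Pullback square: f : Y \<rightarrow> X, g : Z \<rightarrow> X, f' : W \<rightarrow> Z (parallel to f),
  g' : W \<rightarrow> Y (parallel to g), with f g' = g f', universal.\<close>
definition is_pullback :: "('o, 'm) cat \<Rightarrow> 'm \<Rightarrow> 'm \<Rightarrow> 'm \<Rightarrow> 'm \<Rightarrow> bool" where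
  "is_pullback C f g f' g' \<longleftrightarrow>
     f \<in> arr C \<and> g \<in> arr C \<and> tgt C f = tgt C g \<and>
     f' \<in> hom C (src C f') (src C g) \<and> g' \<in> hom C (src C f') (src C f) \<and>
     cmp C f g' = cmp C g f' \<and>
     (\<forall>Q u v. u \<in> hom C Q (src C f) \<and> v \<in> hom C Q (src C g) \<and> cmp C f u = cmp C g v \<longrightarrow>
        (\<exists>!h. h \<in> hom C Q (src C f') \<and> cmp C g' h = u \<and> cmp C f' h = v))"

definition cofibrant :: "('o, 'm) cat \<Rightarrow> 'm set \<Rightarrow> 'o \<Rightarrow> bool" where
  "cofibrant C Cof X \<longleftrightarrow> X \<in> obj C \<and> (\<exists>z f. initial C z \<and> f \<in> hom C z X \<and> f \<in> Cof)"

definition fibrant :: "('o, 'm) cat \<Rightarrow> 'm set \<Rightarrow> 'o \<Rightarrow> bool" where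
  "fibrant C Fib X \<longleftrightarrow> X \<in> obj C \<and> (\<exists>t f. terminal C t \<and> f \<in> hom C X t \<and> f \<in> Fib)"

definition bifibrant :: "('o, 'm) cat \<Rightarrow> 'm set \<Rightarrow> 'm set \<Rightarrow> 'o \<Rightarrow> bool" where
  "bifibrant C Cof Fib X \<longleftrightarrow> cofibrant C Cof X \<and> fibrant C Fib X"

definition cofibration_class :: "('o, 'm) cat \<Rightarrow> 'm set \<Rightarrow> bool" where
  "cofibration_class C Cof \<longleftrightarrow>
     Cof \<subseteq> arr C \<and>
     (\<exists>z. initial C z \<and> ident C z \<in> Cof) \<and>
     (\<forall>f. iso C f \<and> cofibrant C Cof (src C f) \<longrightarrow> f \<in> Cof) \<and>
     (\<forall>f\<in>Cof. \<forall>g\<in>Cof. tgt C f = src C g \<longrightarrow> cmp C g f \<in> Cof) \<and>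
     (\<forall>i g. i \<in> Cof \<and> g \<in> arr C \<and> src C g = src C i \<and>
            cofibrant C Cof (src C i) \<and> cofibrant C Cof (tgt C g) \<longrightarrow>
        (\<exists>i' g'. is_pushout C i g i' g') \<and>
        (\<forall>i' g'. is_pushout C i g i' g' \<longrightarrow> i' \<in> Cof))"

definition fibration_class :: "('o, 'm) cat \<Rightarrow> 'm set \<Rightarrow> bool" where
  "fibration_class C Fib \<longleftrightarrow>
     Fib \<subseteq> arr C \<and>
     (\<exists>t. terminal C t \<and> ident C t \<in> Fib) \<and>
     (\<forall>f. iso C f \<and> fibrant C Fib (tgt C f) \<longrightarrow> f \<in> Fib) \<and>
     (\<forall>f\<in>Fib. \<forall>g\<in>Fib. tgt C f = src C g \<longrightarrow> cmp C g f \<in> Fib) \<and>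
     (\<forall>p g. p \<in> Fib \<and> g \<in> arr C \<and> tgt C g = tgt C p \<and>
            fibrant C Fib (tgt C p) \<and> fibrant C Fib (src C g) \<longrightarrow>
        (\<exists>p' g'. is_pullback C p g p' g') \<and>
        (\<forall>p' g'. is_pullback C p g p' g' \<longrightarrow> p' \<in> Fib))"

definition llp :: "('o, 'm) cat \<Rightarrow> 'm \<Rightarrow> 'm \<Rightarrow> bool" where
  "llp C i p \<longleftrightarrow> i \<in> arr C \<and> p \<in> arr C \<and>
     (\<forall>u v. u \<in> hom C (src C i) (src C p) \<and> v \<in> hom C (tgt C i) (tgt C p) \<and>
            cmp C p u = cmp C v i \<longrightarrow>
        (\<exists>h\<in>hom C (tgt C i) (src C p). cmp C h i = u \<and> cmp C p h = v))"

definition acyclic_fib :: "('o, 'm) cat \<Rightarrow> 'm set \<Rightarrow> 'm set \<Rightarrow> 'm \<Rightarrow> bool" where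
  "acyclic_fib C Cof Fib p \<longleftrightarrow> p \<in> Fib \<and>
     (\<forall>i\<in>Cof. cofibrant C Cof (src C i) \<and> cofibrant C Cof (tgt C i) \<longrightarrow> llp C i p)"

definition acyclic_cof :: "('o, 'm) cat \<Rightarrow> 'm set \<Rightarrow> 'm set \<Rightarrow> 'm \<Rightarrow> bool" where
  "acyclic_cof C Cof Fib i \<longleftrightarrow> i \<in> Cof \<and>
     (\<forall>p\<in>Fib. fibrant C Fib (src C p) \<and> fibrant C Fib (tgt C p) \<longrightarrow> llp C i p)"

definition factorization_condition :: "('o, 'm) cat \<Rightarrow> 'm set \<Rightarrow> 'm set \<Rightarrow> bool" where
  "factorization_condition C Cof Fib \<longleftrightarrow>
     (\<forall>f\<in>arr C. cofibrant C Cof (src C f) \<and> fibrant C Fib (tgt C f) \<longrightarrow>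
        (\<exists>i p. i \<in> Cof \<and> acyclic_fib C Cof Fib p \<and> tgt C i = src C p \<and> f = cmp C p i) \<and>
        (\<exists>j q. acyclic_cof C Cof Fib j \<and> q \<in> Fib \<and> tgt C j = src C q \<and> f = cmp C q j))"

text \<open>Relative strong cylinder object for a cofibration i : A \<rightarrow> B: a pushout
  B \<sqcup>_A B with inclusions in1, in2, and a factorization q \<circ> k of the codiagonal,
  k a cofibration, k \<circ> in1 an acyclic cofibration.\<close>
definition has_rel_strong_cylinder :: "('o, 'm) cat \<Rightarrow> 'm set \<Rightarrow> 'm set \<Rightarrow> 'm \<Rightarrow> bool" where
  "has_rel_strong_cylinder C Cof Fib i \<longleftrightarrow>
     (\<exists>in1 in2 k q. is_pushout C i i in2 in1 \<and>
        k \<in> arr C \<and> src C k = tgt C in1 \<and> q \<in> hom C (tgt C k) (tgt C i) \<and>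
        k \<in> Cof \<and>
        cmp C q (cmp C k in1) = ident C (tgt C i) \<and>
        cmp C q (cmp C k in2) = ident C (tgt C i) \<and>
        acyclic_cof C Cof Fib (cmp C k in1))"

text \<open>Relative strong path object for a fibration p : Y \<rightarrow> X: a pullback
  Y \<times>_X Y with projections pr1, pr2, and a factorization k \<circ> s of the diagonal,
  k a fibration, pr1 \<circ> k an acyclic fibration.\<close>
definition has_rel_strong_path :: "('o, 'm) cat \<Rightarrow> 'm set \<Rightarrow> 'm set \<Rightarrow> 'm \<Rightarrow> bool" where
  "has_rel_strong_path C Cof Fib p \<longleftrightarrow>
     (\<exists>pr1 pr2 s k. is_pullback C p p pr2 pr1 \<and>
        k \<in> arr C \<and> tgt C k = src C pr1 \<and> s \<in> hom C (src C p) (src C k) \<and>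
        k \<in> Fib \<and>
        cmp C pr1 (cmp C k s) = ident C (src C p) \<and>
        cmp C pr2 (cmp C k s) = ident C (src C p) \<and>
        acyclic_fib C Cof Fib (cmp C pr1 k))"

end

theory Submission
  imports Defs
begin

(* (i) \<Rightarrow> (ii): let i : A \<rightarrow> B and j : B \<rightarrow> C be as in (ii), and (u : B \<rightarrow> Y, v : C \<rightarrow> X)
   a lifting problem of j against a fibration p between fibrant objects.  Factoring u as a
   cofibration followed by an acyclic fibration reduces to the case of a cofibrant Y, where p has a
   relative strong path object Y \<rightarrow> P \<rightarrow> Y \<times>\<^sub>X Y.  Lifting against the acyclic
   cofibration j i gives h0 : C \<rightarrow> Y over v with h0 j i = u i.  The maps h0 j and u agree on A
   and over X, so lifting i against P \<rightarrow> Y \<times>\<^sub>X Y gives a homotopy H : B \<rightarrow> P from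
   h0 j to u; lifting j against the acyclic fibration P \<rightarrow> Y (the first endpoint) extends H to a
   homotopy on C starting at h0, whose other endpoint solves the problem.  (ii) \<Rightarrow> (iii) holds
   with J the class of all acyclic cofibrations.

   (iii) \<Rightarrow> (i): factor the diagonal of p as s \<in> J followed by a fibration
   P \<rightarrow> Y \<times>\<^sub>X Y; it remains to show that the first endpoint q : P \<rightarrow> Y, which has
   the section s, is an acyclic fibration.  Factor q = a c with a an acyclic fibration.  Then c s
   has the acyclic fibration a as a retraction, which makes it a retract of the acyclic cofibration
   B \<rightarrow> I\<^sub>A B of its relative strong cylinder; so c s is acyclic, hence so is c by (iii),
   and q is a retract of a. *)

lemma hom_iff: "f \<in> hom C X Y \<longleftrightarrow> f \<in> arr C \<and> src C f = X \<and> tgt C f = Y"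
  by (simp add: hom_def)

lemma llpI:
  assumes "i \<in> arr C" "p \<in> arr C"
    and "\<And>u v. u \<in> hom C (src C i) (src C p) \<Longrightarrow> v \<in> hom C (tgt C i) (tgt C p) \<Longrightarrow>
           cmp C p u = cmp C v i \<Longrightarrow> \<exists>h\<in>hom C (tgt C i) (src C p). cmp C h i = u \<and> cmp C p h = v"
  shows "llp C i p"
  using assms unfolding llp_def by blast

lemma llpE:
  assumes "llp C i p" "u \<in> hom C (src C i) (src C p)" "v \<in> hom C (tgt C i) (tgt C p)"
    "cmp C p u = cmp C v i"
  obtains h where "h \<in> hom C (tgt C i) (src C p)" "cmp C h i = u" "cmp C p h = v"
  using assms unfolding llp_def by blast

lemma pullbackE:
  assumes "is_pullback C f g f' g'" "u \<in> hom C Q (src C f)" "v \<in> hom C Q (src C g)"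
    "cmp C f u = cmp C g v"
  obtains h where "h \<in> hom C Q (src C f')" "cmp C g' h = u" "cmp C f' h = v"
  using assms unfolding is_pullback_def by blast

lemma pushoutE:
  assumes "is_pushout C f g f' g'" "u \<in> hom C (tgt C f) Q" "v \<in> hom C (tgt C g) Q"
    "cmp C u f = cmp C v g"
  obtains h where "h \<in> hom C (tgt C f') Q" "cmp C h g' = u" "cmp C h f' = v"
  using assms unfolding is_pushout_def by blast

lemma pullback_swap:
  assumes "is_pullback C f g f' g'"
  shows "is_pullback C g f g' f'"
proof -
  have "src C g' = src C f'"
    using assms unfolding is_pullback_def by (simp add: hom_iff)
  with assms show ?thesis
    unfolding is_pullback_def by (metis (no_types, lifting))
qed

definition retract_of :: "('o, 'm) cat \<Rightarrow> 'm \<Rightarrow> 'm \<Rightarrow> bool" where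
  "retract_of C f g \<longleftrightarrow> f \<in> arr C \<and> g \<in> arr C \<and>
     (\<exists>s r s' r'. s \<in> hom C (src C f) (src C g) \<and> r \<in> hom C (src C g) (src C f) \<and>
        s' \<in> hom C (tgt C f) (tgt C g) \<and> r' \<in> hom C (tgt C g) (tgt C f) \<and>
        cmp C r s = ident C (src C f) \<and> cmp C r' s' = ident C (tgt C f) \<and>
        cmp C g s = cmp C s' f \<and> cmp C f r = cmp C r' g)"

locale category =
  fixes C :: "('o, 'm) cat"
  assumes is_category: "is_category C"
begin

lemma cmp_arr [simp]: "f \<in> arr C \<Longrightarrow> g \<in> arr C \<Longrightarrow> tgt C f = src C g \<Longrightarrow> cmp C g f \<in> arr C"
  and cmp_src [simp]: "f \<in> arr C \<Longrightarrow> g \<in> arr C \<Longrightarrow> tgt C f = src C g \<Longrightarrow> src C (cmp C g f) = src C f"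
  and cmp_tgt [simp]: "f \<in> arr C \<Longrightarrow> g \<in> arr C \<Longrightarrow> tgt C f = src C g \<Longrightarrow> tgt C (cmp C g f) = tgt C g"
  using is_category unfolding is_category_def hom_def by blast+

lemma src_obj [simp]: "f \<in> arr C \<Longrightarrow> src C f \<in> obj C"
  and tgt_obj [simp]: "f \<in> arr C \<Longrightarrow> tgt C f \<in> obj C"
  using is_category unfolding is_category_def by blast+

lemma ident_arr [simp]: "X \<in> obj C \<Longrightarrow> ident C X \<in> arr C"
  and ident_src [simp]: "X \<in> obj C \<Longrightarrow> src C (ident C X) = X"
  and ident_tgt [simp]: "X \<in> obj C \<Longrightarrow> tgt C (ident C X) = X"
  using is_category unfolding is_category_def hom_def by blast+

lemma cmp_ident_left: "f \<in> arr C \<Longrightarrow> tgt C f = X \<Longrightarrow> cmp C (ident C X) f = f"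
  and cmp_ident_right: "f \<in> arr C \<Longrightarrow> src C f = X \<Longrightarrow> cmp C f (ident C X) = f"
  using is_category unfolding is_category_def by blast+

lemma cmp_assoc:
  "f \<in> arr C \<Longrightarrow> g \<in> arr C \<Longrightarrow> h \<in> arr C \<Longrightarrow> tgt C f = src C g \<Longrightarrow> tgt C g = src C h \<Longrightarrow>
   cmp C (cmp C h g) f = cmp C h (cmp C g f)"
  using is_category unfolding is_category_def by metis

lemma llp_retract_left:
  assumes llp: "llp C i p" and retract: "retract_of C i' i"
  shows "llp C i' p"
proof (rule llpI)
  obtain s r s' r' where s: "s \<in> hom C (src C i') (src C i)" and r: "r \<in> hom C (src C i) (src C i')"
    and s': "s' \<in> hom C (tgt C i') (tgt C i)" and r': "r' \<in> hom C (tgt C i) (tgt C i')"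
    and rs: "cmp C r s = ident C (src C i')" and rs': "cmp C r' s' = ident C (tgt C i')"
    and comm_s: "cmp C i s = cmp C s' i'" and comm_r: "cmp C i' r = cmp C r' i"
    using retract unfolding retract_of_def by blast
  have i: "i \<in> arr C" and i': "i' \<in> arr C" and p: "p \<in> arr C"
    using llp retract by (auto simp: llp_def retract_of_def)
  show "i' \<in> arr C" "p \<in> arr C" by fact+
  fix u v
  assume u: "u \<in> hom C (src C i') (src C p)" and v: "v \<in> hom C (tgt C i') (tgt C p)"
    and sq: "cmp C p u = cmp C v i'"
  note maps = i i' p s r s' r' u v
  have "cmp C p (cmp C u r) = cmp C (cmp C v i') r"
    using maps by (simp add: hom_iff sq flip: cmp_assoc)
  also have "\<dots> = cmp C (cmp C v r') i"
    using maps by (simp add: hom_iff cmp_assoc comm_r)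
  finally have "cmp C p (cmp C u r) = cmp C (cmp C v r') i" .
  then obtain h where h: "h \<in> hom C (tgt C i) (src C p)" "cmp C h i = cmp C u r"
    "cmp C p h = cmp C v r'"
    by (rule llpE[OF llp, rotated 2]) (use maps in \<open>auto simp: hom_iff\<close>)
  show "\<exists>h\<in>hom C (tgt C i') (src C p). cmp C h i' = u \<and> cmp C p h = v"
  proof (intro bexI conjI)
    have "cmp C (cmp C h s') i' = cmp C (cmp C h i) s"
      using maps h(1) by (simp add: hom_iff cmp_assoc comm_s)
    also have "\<dots> = u"
      using maps by (simp add: h(2) hom_iff cmp_assoc rs cmp_ident_right)
    finally show "cmp C (cmp C h s') i' = u" .
    have "cmp C p (cmp C h s') = cmp C (cmp C v r') s'"
      using maps h by (simp add: hom_iff flip: cmp_assoc)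
    also have "\<dots> = v"
      using maps by (simp add: hom_iff cmp_assoc rs' cmp_ident_right)
    finally show "cmp C p (cmp C h s') = v" .
    show "cmp C h s' \<in> hom C (tgt C i') (src C p)"
      using maps h by (auto simp: hom_iff)
  qed
qed

lemma llp_retract_right:
  assumes llp: "llp C i p" and retract: "retract_of C p' p"
  shows "llp C i p'"
proof (rule llpI)
  obtain s r s' r' where s: "s \<in> hom C (src C p') (src C p)" and r: "r \<in> hom C (src C p) (src C p')"
    and s': "s' \<in> hom C (tgt C p') (tgt C p)" and r': "r' \<in> hom C (tgt C p) (tgt C p')"
    and rs: "cmp C r s = ident C (src C p')" and rs': "cmp C r' s' = ident C (tgt C p')"
    and comm_s: "cmp C p s = cmp C s' p'" and comm_r: "cmp C p' r = cmp C r' p"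
    using retract unfolding retract_of_def by blast
  have i: "i \<in> arr C" and p: "p \<in> arr C" and p': "p' \<in> arr C"
    using llp retract by (auto simp: llp_def retract_of_def)
  show "i \<in> arr C" "p' \<in> arr C" by fact+
  fix u v
  assume u: "u \<in> hom C (src C i) (src C p')" and v: "v \<in> hom C (tgt C i) (tgt C p')"
    and sq: "cmp C p' u = cmp C v i"
  note maps = i p p' s r s' r' u v
  have "cmp C p (cmp C s u) = cmp C (cmp C s' p') u"
    using maps by (simp add: hom_iff comm_s flip: cmp_assoc)
  also have "\<dots> = cmp C (cmp C s' v) i"
    using maps by (simp add: hom_iff cmp_assoc sq)
  finally have "cmp C p (cmp C s u) = cmp C (cmp C s' v) i" .
  then obtain h where h: "h \<in> hom C (tgt C i) (src C p)" "cmp C h i = cmp C s u"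
    "cmp C p h = cmp C s' v"
    by (rule llpE[OF llp, rotated 2]) (use maps in \<open>auto simp: hom_iff\<close>)
  show "\<exists>h\<in>hom C (tgt C i) (src C p'). cmp C h i = u \<and> cmp C p' h = v"
  proof (intro bexI conjI)
    have "cmp C (cmp C r h) i = cmp C (cmp C r s) u"
      using maps h by (simp add: hom_iff cmp_assoc)
    also have "\<dots> = u"
      using maps by (simp add: hom_iff rs cmp_ident_left)
    finally show "cmp C (cmp C r h) i = u" .
    have "cmp C p' (cmp C r h) = cmp C (cmp C r' p) h"
      using maps h(1) by (simp add: hom_iff comm_r flip: cmp_assoc)
    also have "\<dots> = cmp C (cmp C r' s') v"
      using maps h by (simp add: hom_iff cmp_assoc)
    also have "\<dots> = v"
      using maps by (simp add: hom_iff rs' cmp_ident_left)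
    finally show "cmp C p' (cmp C r h) = v" .
    show "cmp C r h \<in> hom C (tgt C i) (src C p')"
      using maps h by (auto simp: hom_iff)
  qed
qed

lemma pullback_eq:
  assumes pb: "is_pullback C f g f' g'"
    and h: "h \<in> hom C Q (src C f')" "h' \<in> hom C Q (src C f')"
    and "cmp C g' h = cmp C g' h'" "cmp C f' h = cmp C f' h'"
  shows "h = h'"
proof -
  have maps: "f \<in> arr C" "g \<in> arr C" "f' \<in> hom C (src C f') (src C g)"
    "g' \<in> hom C (src C f') (src C f)" and comm: "cmp C f g' = cmp C g f'"
    using pb unfolding is_pullback_def by auto
  have "cmp C f (cmp C g' h) = cmp C g (cmp C f' h)"
    using maps h by (simp add: hom_iff comm flip: cmp_assoc)
  moreover have "cmp C g' h \<in> hom C Q (src C f)" "cmp C f' h \<in> hom C Q (src C g)"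
    using maps h by (auto simp: hom_iff)
  ultimately show ?thesis
    using pb h assms(4,5) unfolding is_pullback_def by metis
qed

lemma pushout_eq:
  assumes po: "is_pushout C f g f' g'"
    and h: "h \<in> hom C (tgt C f') Q" "h' \<in> hom C (tgt C f') Q"
    and "cmp C h g' = cmp C h' g'" "cmp C h f' = cmp C h' f'"
  shows "h = h'"
proof -
  have maps: "f \<in> arr C" "g \<in> arr C" "f' \<in> hom C (tgt C g) (tgt C f')"
    "g' \<in> hom C (tgt C f) (tgt C f')" "src C f = src C g" and comm: "cmp C g' f = cmp C f' g"
    using po unfolding is_pushout_def by auto
  have "cmp C (cmp C h g') f = cmp C (cmp C h f') g"
    using maps h by (simp add: hom_iff comm cmp_assoc)
  moreover have "cmp C h g' \<in> hom C (tgt C f) Q" "cmp C h f' \<in> hom C (tgt C g) Q"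
    using maps h by (auto simp: hom_iff)
  ultimately show ?thesis
    using po h assms(4,5) unfolding is_pushout_def by metis
qed

end

locale cof_fib_category = category C for C :: "('o, 'm) cat" +
  fixes Cof Fib :: "'m set"
  assumes cofibration_class: "cofibration_class C Cof"
    and fibration_class: "fibration_class C Fib"
begin

lemma Cof_arr: "i \<in> Cof \<Longrightarrow> i \<in> arr C"
  using cofibration_class unfolding cofibration_class_def by blast

lemma Fib_arr: "p \<in> Fib \<Longrightarrow> p \<in> arr C"
  using fibration_class unfolding fibration_class_def by blast

lemma Cof_cmp: "i \<in> Cof \<Longrightarrow> j \<in> Cof \<Longrightarrow> tgt C i = src C j \<Longrightarrow> cmp C j i \<in> Cof"
  using cofibration_class unfolding cofibration_class_def by blast

lemma Fib_cmp: "p \<in> Fib \<Longrightarrow> q \<in> Fib \<Longrightarrow> tgt C p = src C q \<Longrightarrow> cmp C q p \<in> Fib"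
  using fibration_class unfolding fibration_class_def by blast

lemma acyclic_cof_Cof: "acyclic_cof C Cof Fib i \<Longrightarrow> i \<in> Cof"
  and acyclic_fib_Fib: "acyclic_fib C Cof Fib p \<Longrightarrow> p \<in> Fib"
  unfolding acyclic_cof_def acyclic_fib_def by blast+

lemma cofibrant_tgt:
  assumes "cofibrant C Cof (src C i)" "i \<in> Cof"
  shows "cofibrant C Cof (tgt C i)"
proof -
  obtain z f where "initial C z" "f \<in> hom C z (src C i)" "f \<in> Cof"
    using assms(1) unfolding cofibrant_def by blast
  moreover have "cmp C i f \<in> hom C z (tgt C i)" "cmp C i f \<in> Cof"
    using calculation assms(2) Cof_arr by (auto simp: hom_iff Cof_cmp)
  ultimately show ?thesis
    using assms(2) Cof_arr unfolding cofibrant_def by auto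
qed

lemma fibrant_src:
  assumes "fibrant C Fib (tgt C p)" "p \<in> Fib"
  shows "fibrant C Fib (src C p)"
proof -
  obtain t f where "terminal C t" "f \<in> hom C (tgt C p) t" "f \<in> Fib"
    using assms(1) unfolding fibrant_def by blast
  moreover have "cmp C f p \<in> hom C (src C p) t" "cmp C f p \<in> Fib"
    using calculation assms(2) Fib_arr by (auto simp: hom_iff Fib_cmp)
  ultimately show ?thesis
    using assms(2) Fib_arr unfolding fibrant_def by auto
qed

lemma cofibration_pushout:
  assumes "is_pushout C i g i' g'" "i \<in> Cof" "g \<in> arr C" "src C g = src C i"
    "cofibrant C Cof (src C i)" "cofibrant C Cof (tgt C g)"
  shows "i' \<in> Cof"
  using assms cofibration_class unfolding cofibration_class_def by blast

lemma fibration_pullback_exists: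
  assumes "p \<in> Fib" "g \<in> arr C" "tgt C g = tgt C p"
    "fibrant C Fib (tgt C p)" "fibrant C Fib (src C g)"
  obtains p' g' where "is_pullback C p g p' g'"
  using assms fibration_class unfolding fibration_class_def by blast

lemma fibration_pullback:
  assumes "is_pullback C p g p' g'" "p \<in> Fib" "g \<in> arr C" "tgt C g = tgt C p"
    "fibrant C Fib (tgt C p)" "fibrant C Fib (src C g)"
  shows "p' \<in> Fib"
  using assms fibration_class unfolding fibration_class_def by blast

lemma acyclic_cof_llp:
  "acyclic_cof C Cof Fib i \<Longrightarrow> p \<in> Fib \<Longrightarrow> fibrant C Fib (src C p) \<Longrightarrow> fibrant C Fib (tgt C p) \<Longrightarrow>
   llp C i p"
  unfolding acyclic_cof_def by blast

lemma acyclic_fib_llp: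
  "acyclic_fib C Cof Fib p \<Longrightarrow> i \<in> Cof \<Longrightarrow> cofibrant C Cof (src C i) \<Longrightarrow> cofibrant C Cof (tgt C i) \<Longrightarrow>
   llp C i p"
  unfolding acyclic_fib_def by blast

lemma acyclic_cof_retract:
  "acyclic_cof C Cof Fib i \<Longrightarrow> retract_of C i' i \<Longrightarrow> i' \<in> Cof \<Longrightarrow> acyclic_cof C Cof Fib i'"
  unfolding acyclic_cof_def using llp_retract_left by blast

lemma acyclic_fib_retract:
  "acyclic_fib C Cof Fib p \<Longrightarrow> retract_of C p' p \<Longrightarrow> p' \<in> Fib \<Longrightarrow> acyclic_fib C Cof Fib p'"
  unfolding acyclic_fib_def using llp_retract_right by blast

lemma acyclic_fib_if_factorization:
  assumes q: "q \<in> Fib" "fibrant C Fib (src C q)" "fibrant C Fib (tgt C q)"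
    and c: "acyclic_cof C Cof Fib c" and a: "acyclic_fib C Cof Fib a"
    and q_eq: "tgt C c = src C a" "q = cmp C a c"
  shows "acyclic_fib C Cof Fib q"
proof -
  have arrs: "c \<in> arr C" "a \<in> arr C" "q \<in> arr C"
    using c a q(1) Cof_arr Fib_arr acyclic_cof_Cof acyclic_fib_Fib by blast+
  have ends: "src C c = src C q" "tgt C a = tgt C q"
    using arrs q_eq by simp_all
  have maps: "c \<in> hom C (src C q) (src C a)" "a \<in> hom C (src C a) (tgt C q)"
    using arrs ends q_eq(1) by (simp_all add: hom_iff)
  have ids: "ident C (src C q) \<in> hom C (src C q) (src C q)"
    "ident C (tgt C q) \<in> hom C (tgt C q) (tgt C q)"
    using arrs by (simp_all add: hom_iff)
  have "cmp C q (ident C (src C q)) = cmp C a c"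
    using arrs q_eq by (simp add: cmp_ident_right)
  then obtain r where r: "r \<in> hom C (src C a) (src C q)" "cmp C r c = ident C (src C q)"
    "cmp C q r = a"
    by (rule llpE[OF acyclic_cof_llp[OF c q], rotated 2]) (use maps ids ends in \<open>simp_all add: hom_iff\<close>)
  have "retract_of C q a"
    unfolding retract_of_def
    using arrs ends maps ids r q_eq(1) q_eq(2)[symmetric]
    by (intro conjI exI[of _ c] exI[of _ r] exI[of _ "ident C (tgt C q)"])
      (simp_all add: hom_iff cmp_ident_left cmp_ident_right)
  then show ?thesis
    by (rule acyclic_fib_retract[OF a _ q(1)])
qed

lemma cylinder_cofibrant:
  assumes w: "w \<in> Cof" "cofibrant C Cof (src C w)"
    and po: "is_pushout C w w in2 in1"
    and k: "k \<in> Cof" "src C k = tgt C in1"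
  shows "cofibrant C Cof (src C k)" "cofibrant C Cof (tgt C k)"
proof -
  have in12: "in1 \<in> hom C (tgt C w) (tgt C in2)" "in2 \<in> hom C (tgt C w) (tgt C in2)"
    using po unfolding is_pushout_def by auto
  have "in2 \<in> Cof"
    using cofibration_pushout[OF po w(1) Cof_arr[OF w(1)] refl w(2)] cofibrant_tgt[OF w(2,1)] .
  then have "cofibrant C Cof (tgt C in2)"
    using cofibrant_tgt[of in2] cofibrant_tgt[OF w(2,1)] in12 by (simp add: hom_iff)
  then show "cofibrant C Cof (src C k)"
    using k(2) in12 by (simp add: hom_iff)
  then show "cofibrant C Cof (tgt C k)"
    using cofibrant_tgt k(1) by blast
qed

lemma cylinder_homotopy:
  assumes w: "w \<in> Cof" "cofibrant C Cof (src C w)"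
    and po: "is_pushout C w w in2 in1"
    and k: "k \<in> Cof" "src C k = tgt C in1"
    and q: "q \<in> hom C (tgt C k) (tgt C w)"
      "cmp C q (cmp C k in1) = ident C (tgt C w)" "cmp C q (cmp C k in2) = ident C (tgt C w)"
    and a: "acyclic_fib C Cof Fib a" "a \<in> hom C (tgt C w) (src C w)"
      "cmp C a w = ident C (src C w)"
  obtains H where "H \<in> hom C (tgt C k) (tgt C w)"
    "cmp C H (cmp C k in1) = cmp C w a" "cmp C H (cmp C k in2) = ident C (tgt C w)"
proof -
  have in12: "in1 \<in> hom C (tgt C w) (tgt C in2)" "in2 \<in> hom C (tgt C w) (tgt C in2)"
    using po unfolding is_pushout_def by auto
  have arrs: "w \<in> arr C" "k \<in> arr C" "a \<in> arr C" "in1 \<in> arr C" "in2 \<in> arr C" "q \<in> arr C"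
    using w(1) k(1) a(2) in12 q(1) Cof_arr by (simp_all add: hom_iff)
  have ends: "src C in1 = tgt C w" "tgt C in1 = tgt C in2" "src C in2 = tgt C w"
    "src C a = tgt C w" "tgt C a = src C w" "src C q = tgt C k" "tgt C q = tgt C w"
    using in12 a(2) q(1) by (simp_all add: hom_iff)
  have "cmp C (cmp C w a) w = cmp C (ident C (tgt C w)) w"
    using arrs ends by (simp add: cmp_assoc a(3) cmp_ident_left cmp_ident_right)
  then obtain T where T: "T \<in> hom C (tgt C in2) (tgt C w)" "cmp C T in1 = cmp C w a"
    "cmp C T in2 = ident C (tgt C w)"
    by (rule pushoutE[OF po, rotated 2]) (use arrs ends in \<open>simp_all add: hom_iff\<close>)
  have T_arr: "T \<in> arr C" "src C T = tgt C in2" "tgt C T = tgt C w"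
    using T(1) by (simp_all add: hom_iff)
  have "cmp C a T = cmp C (cmp C a q) k"
  proof (rule pushout_eq[OF po])
    have "cmp C (cmp C a T) in1 = cmp C (cmp C a w) a"
      using arrs ends T_arr by (simp add: cmp_assoc T(2))
    also have "\<dots> = cmp C (cmp C (cmp C a q) k) in1"
      using arrs ends k(2) by (simp add: cmp_assoc a(3) q(2) cmp_ident_left cmp_ident_right)
    finally show "cmp C (cmp C a T) in1 = cmp C (cmp C (cmp C a q) k) in1" .
    show "cmp C (cmp C a T) in2 = cmp C (cmp C (cmp C a q) k) in2"
      using arrs ends T_arr k(2) by (simp add: cmp_assoc T(3) q(3) cmp_ident_right)
  qed (use arrs ends T_arr k(2) in \<open>simp_all add: hom_iff\<close>)
  then obtain H where H: "H \<in> hom C (tgt C k) (src C a)" "cmp C H k = T" "cmp C a H = cmp C a q"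
    by (rule llpE[OF acyclic_fib_llp[OF a(1) k(1) cylinder_cofibrant[OF w po k]], rotated 2])
      (use arrs ends T_arr k(2) in \<open>simp_all add: hom_iff\<close>)
  show thesis
  proof
    show "H \<in> hom C (tgt C k) (tgt C w)"
      using H(1) ends by (simp add: hom_iff)
    show "cmp C H (cmp C k in1) = cmp C w a" "cmp C H (cmp C k in2) = ident C (tgt C w)"
      using arrs ends H(1) k(2) by (simp_all add: hom_iff H(2) T(2,3) flip: cmp_assoc)
  qed
qed

lemma acyclic_cof_if_acyclic_fib_retraction:
  assumes w: "w \<in> Cof" "cofibrant C Cof (src C w)"
    and cylinder: "has_rel_strong_cylinder C Cof Fib w"
    and a: "acyclic_fib C Cof Fib a" "a \<in> hom C (tgt C w) (src C w)"
      "cmp C a w = ident C (src C w)"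
  shows "acyclic_cof C Cof Fib w"
proof -
  obtain in1 in2 k q where po: "is_pushout C w w in2 in1" and k: "k \<in> Cof" "src C k = tgt C in1"
    and q: "q \<in> hom C (tgt C k) (tgt C w)"
      "cmp C q (cmp C k in1) = ident C (tgt C w)" "cmp C q (cmp C k in2) = ident C (tgt C w)"
    and k_in1: "acyclic_cof C Cof Fib (cmp C k in1)"
    using cylinder unfolding has_rel_strong_cylinder_def by blast
  obtain H where H: "H \<in> hom C (tgt C k) (tgt C w)"
    "cmp C H (cmp C k in1) = cmp C w a" "cmp C H (cmp C k in2) = ident C (tgt C w)"
    using cylinder_homotopy[OF w po k q a] .
  have in12: "in1 \<in> hom C (tgt C w) (tgt C in2)" "in2 \<in> hom C (tgt C w) (tgt C in2)"
    and glue: "cmp C in1 w = cmp C in2 w"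
    using po unfolding is_pushout_def by auto
  have arrs: "w \<in> arr C" "k \<in> arr C" "in1 \<in> arr C" "in2 \<in> arr C"
    using w(1) k(1) in12 Cof_arr by (simp_all add: hom_iff)
  have ends: "src C in1 = tgt C w" "tgt C in1 = tgt C in2" "src C in2 = tgt C w"
    using in12 by (simp_all add: hom_iff)
  have "retract_of C w (cmp C k in1)"
    unfolding retract_of_def
    using arrs ends k(2) a(2,3) H
    by (intro conjI exI[of _ w] exI[of _ a] exI[of _ "cmp C k in2"] exI[of _ H])
      (simp_all add: hom_iff cmp_assoc glue)
  then show ?thesis
    by (rule acyclic_cof_retract[OF k_in1 _ w(1)])
qed

lemma path_homotopy:
  assumes p: "p \<in> Fib" "fibrant C Fib (src C p)" "fibrant C Fib (tgt C p)"
    and pb: "is_pullback C p p pr2 pr1"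
    and k: "k \<in> Fib" "tgt C k = src C pr1"
    and s: "s \<in> hom C (src C p) (src C k)"
      "cmp C pr1 (cmp C k s) = ident C (src C p)" "cmp C pr2 (cmp C k s) = ident C (src C p)"
    and i: "acyclic_cof C Cof Fib i"
    and fg: "f \<in> hom C (tgt C i) (src C p)" "g \<in> hom C (tgt C i) (src C p)"
      "cmp C f i = cmp C g i" "cmp C p f = cmp C p g"
  obtains H where "H \<in> hom C (tgt C i) (src C k)"
    "cmp C pr1 (cmp C k H) = f" "cmp C pr2 (cmp C k H) = g"
proof -
  have pr: "pr1 \<in> hom C (src C pr1) (src C p)" "pr2 \<in> hom C (src C pr1) (src C p)"
    using pb unfolding is_pullback_def by (auto simp: hom_iff)
  have arrs: "p \<in> arr C" "k \<in> arr C" "i \<in> arr C" "pr1 \<in> arr C" "pr2 \<in> arr C"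
    "s \<in> arr C" "f \<in> arr C" "g \<in> arr C"
    using p(1) k(1) i pr s(1) fg(1,2) Fib_arr Cof_arr acyclic_cof_Cof by (simp_all add: hom_iff)
  have ends: "src C pr2 = src C pr1" "tgt C pr1 = src C p" "tgt C pr2 = src C p"
    "src C s = src C p" "tgt C s = src C k" "src C f = tgt C i" "tgt C f = src C p"
    "src C g = tgt C i" "tgt C g = src C p"
    using pr s(1) fg(1,2) by (simp_all add: hom_iff)
  have "pr1 \<in> Fib"
    using fibration_pullback[OF pullback_swap[OF pb] p(1) arrs(1) refl p(3,2)] .
  then have k_fibrant: "fibrant C Fib (tgt C k)" "fibrant C Fib (src C k)"
    using fibrant_src[of pr1] fibrant_src[of "cmp C pr1 k"] p(2) k arrs ends Fib_cmp by simp_all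
  obtain m where m: "m \<in> hom C (tgt C i) (src C pr2)" "cmp C pr1 m = f" "cmp C pr2 m = g"
    using pullbackE[OF pb fg(1,2,4)] .
  have m_arr: "m \<in> arr C" "src C m = tgt C i" "tgt C m = src C pr1"
    using m(1) ends by (simp_all add: hom_iff)
  have "cmp C k (cmp C s (cmp C f i)) = cmp C m i"
  proof (rule pullback_eq[OF pb])
    show "cmp C pr1 (cmp C k (cmp C s (cmp C f i))) = cmp C pr1 (cmp C m i)"
      using arrs ends k(2) m_arr by (simp add: s(2) m(2) cmp_ident_left flip: cmp_assoc)
    show "cmp C pr2 (cmp C k (cmp C s (cmp C f i))) = cmp C pr2 (cmp C m i)"
      using arrs ends k(2) m_arr by (simp add: s(3) m(3) fg(3) cmp_ident_left flip: cmp_assoc)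
  qed (use arrs ends k(2) m_arr in \<open>simp_all add: hom_iff\<close>)
  then obtain H where H: "H \<in> hom C (tgt C i) (src C k)" "cmp C k H = m"
    by (rule llpE[OF acyclic_cof_llp[OF i k(1) k_fibrant(2,1)], rotated 2])
      (use arrs ends k(2) m_arr in \<open>simp_all add: hom_iff\<close>)
  show thesis
    by (rule that[OF H(1)]) (simp_all add: H(2) m(2,3))
qed

lemma lift_if_homotopic_lift:
  assumes pb: "is_pullback C p p pr2 pr1"
    and k: "k \<in> arr C" "tgt C k = src C pr1" and pr1_k_acyclic: "acyclic_fib C Cof Fib (cmp C pr1 k)"
    and j: "j \<in> Cof" "cofibrant C Cof (src C j)" "cofibrant C Cof (tgt C j)"
    and h0: "h0 \<in> hom C (tgt C j) (src C p)"
    and H: "H \<in> hom C (src C j) (src C k)"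
      "cmp C pr1 (cmp C k H) = cmp C h0 j" "cmp C pr2 (cmp C k H) = u"
  shows "\<exists>h\<in>hom C (tgt C j) (src C p). cmp C h j = u \<and> cmp C p h = cmp C p h0"
proof -
  have pr: "pr1 \<in> hom C (src C pr1) (src C p)" "pr2 \<in> hom C (src C pr1) (src C p)"
    and glue: "cmp C p pr1 = cmp C p pr2" and p_arr: "p \<in> arr C"
    using pb unfolding is_pullback_def by (auto simp: hom_iff)
  have arrs: "j \<in> arr C" "pr1 \<in> arr C" "pr2 \<in> arr C" "h0 \<in> arr C" "H \<in> arr C"
    using j(1) pr h0 H(1) Cof_arr by (simp_all add: hom_iff)
  have ends: "src C pr2 = src C pr1" "tgt C pr1 = src C p" "tgt C pr2 = src C p"
    "src C h0 = tgt C j" "tgt C h0 = src C p" "src C H = src C j" "tgt C H = src C k"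
    using pr h0 H(1) by (simp_all add: hom_iff)
  have "cmp C (cmp C pr1 k) H = cmp C h0 j"
    using arrs ends k by (simp add: cmp_assoc H(2))
  then obtain H' where H': "H' \<in> hom C (tgt C j) (src C k)" "cmp C H' j = H"
    "cmp C (cmp C pr1 k) H' = h0"
    by (rule llpE[OF acyclic_fib_llp[OF pr1_k_acyclic j], rotated 2])
      (use arrs ends k in \<open>simp_all add: hom_iff\<close>)
  have H'_arr: "H' \<in> arr C" "src C H' = tgt C j" "tgt C H' = src C k"
    using H'(1) by (simp_all add: hom_iff)
  show ?thesis
  proof (intro bexI conjI)
    show "cmp C (cmp C pr2 (cmp C k H')) j = u"
      using arrs H'_arr k ends by (simp add: cmp_assoc H'(2) H(3))
    have "cmp C p (cmp C pr2 (cmp C k H')) = cmp C p (cmp C (cmp C pr1 k) H')"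
      using arrs H'_arr k ends p_arr by (simp flip: glue cmp_assoc)
    then show "cmp C p (cmp C pr2 (cmp C k H')) = cmp C p h0"
      by (simp add: H'(3))
    show "cmp C pr2 (cmp C k H') \<in> hom C (tgt C j) (src C p)"
      using arrs H'_arr k ends by (simp add: hom_iff)
  qed
qed

lemma llp_if_rel_strong_path:
  assumes p: "p \<in> Fib" "fibrant C Fib (src C p)" "fibrant C Fib (tgt C p)"
    and path: "has_rel_strong_path C Cof Fib p"
    and i: "acyclic_cof C Cof Fib i"
    and j: "j \<in> Cof" "tgt C i = src C j" "cofibrant C Cof (src C j)" "cofibrant C Cof (tgt C j)"
    and ji: "acyclic_cof C Cof Fib (cmp C j i)"
  shows "llp C j p"
proof (rule llpI)
  obtain pr1 pr2 s k where pb: "is_pullback C p p pr2 pr1" and k: "k \<in> Fib" "tgt C k = src C pr1"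
    and s: "s \<in> hom C (src C p) (src C k)"
      "cmp C pr1 (cmp C k s) = ident C (src C p)" "cmp C pr2 (cmp C k s) = ident C (src C p)"
    and pr1_k_acyclic: "acyclic_fib C Cof Fib (cmp C pr1 k)"
    using path unfolding has_rel_strong_path_def by blast
  have arrs: "p \<in> arr C" "k \<in> arr C" "i \<in> arr C" "j \<in> arr C"
    using p(1) k(1) i j(1) Fib_arr Cof_arr acyclic_cof_Cof by blast+
  show "j \<in> arr C" "p \<in> arr C" using arrs by simp_all
  fix u v
  assume u: "u \<in> hom C (src C j) (src C p)" and v: "v \<in> hom C (tgt C j) (tgt C p)"
    and sq: "cmp C p u = cmp C v j"
  have uv: "u \<in> arr C" "src C u = src C j" "tgt C u = src C p"
    "v \<in> arr C" "src C v = tgt C j" "tgt C v = tgt C p"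
    using u v by (simp_all add: hom_iff)
  have "cmp C p (cmp C u i) = cmp C v (cmp C j i)"
    using arrs uv j(2) by (simp add: sq flip: cmp_assoc)
  then obtain h0 where h0: "h0 \<in> hom C (tgt C j) (src C p)" "cmp C h0 (cmp C j i) = cmp C u i"
    "cmp C p h0 = v"
    by (rule llpE[OF acyclic_cof_llp[OF ji p], rotated 2])
      (use arrs uv j(2) in \<open>simp_all add: hom_iff\<close>)
  have h0_arr: "h0 \<in> arr C" "src C h0 = tgt C j" "tgt C h0 = src C p"
    using h0(1) by (simp_all add: hom_iff)
  obtain H where "H \<in> hom C (src C j) (src C k)" "cmp C pr1 (cmp C k H) = cmp C h0 j"
    "cmp C pr2 (cmp C k H) = u"
  proof (rule path_homotopy[OF p pb k s i])
    show "cmp C (cmp C h0 j) i = cmp C u i"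
      using arrs h0_arr j(2) by (simp add: cmp_assoc h0(2))
    show "cmp C p (cmp C h0 j) = cmp C p u"
      using arrs h0_arr by (simp add: sq h0(3) flip: cmp_assoc)
  qed (use arrs uv h0_arr j(2) in \<open>simp_all add: hom_iff\<close>)
  then show "\<exists>h\<in>hom C (tgt C j) (src C p). cmp C h j = u \<and> cmp C p h = v"
    using lift_if_homotopic_lift[OF pb arrs(2) k(2) pr1_k_acyclic j(1,3,4) h0(1)] h0(3) by simp
qed

lemma llp_if_llp_cofibrant_domain:
  assumes fact: "factorization_condition C Cof Fib"
    and j: "j \<in> Cof" "cofibrant C Cof (src C j)"
    and llp_cofibrant: "\<And>p'. p' \<in> Fib \<Longrightarrow> cofibrant C Cof (src C p') \<Longrightarrow>
      fibrant C Fib (src C p') \<Longrightarrow> fibrant C Fib (tgt C p') \<Longrightarrow> llp C j p'"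
    and p: "p \<in> Fib" "fibrant C Fib (tgt C p)"
  shows "llp C j p"
proof (rule llpI)
  show j_arr: "j \<in> arr C" and p_arr: "p \<in> arr C"
    using j(1) p(1) Cof_arr Fib_arr by simp_all
  fix u v
  assume u: "u \<in> hom C (src C j) (src C p)" and v: "v \<in> hom C (tgt C j) (tgt C p)"
    and sq: "cmp C p u = cmp C v j"
  have p_fibrant: "fibrant C Fib (src C p)"
    using fibrant_src[OF p(2,1)] .
  obtain e b where e: "e \<in> Cof" and b: "acyclic_fib C Cof Fib b" and eb: "tgt C e = src C b"
    and u_eq: "u = cmp C b e"
    using fact u j(2) p_fibrant unfolding factorization_condition_def hom_iff by metis
  have eb_arr: "e \<in> arr C" "b \<in> arr C" "src C e = src C j" "tgt C b = src C p" "b \<in> Fib"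
    using e b u u_eq eb Cof_arr Fib_arr acyclic_fib_Fib by (auto simp: hom_iff)
  have llp_j_pb: "llp C j (cmp C p b)"
  proof (rule llp_cofibrant)
    show "cmp C p b \<in> Fib"
      using Fib_cmp eb_arr p(1) by simp
    show "cofibrant C Cof (src C (cmp C p b))"
      using cofibrant_tgt[OF _ e] eb_arr eb j(2) p_arr by simp
    show "fibrant C Fib (src C (cmp C p b))"
      using fibrant_src[OF _ eb_arr(5)] eb_arr p_arr p_fibrant by simp
    show "fibrant C Fib (tgt C (cmp C p b))"
      using eb_arr p_arr p(2) by simp
  qed
  have "cmp C (cmp C p b) e = cmp C v j"
    using eb_arr p_arr eb by (simp add: cmp_assoc sq flip: u_eq)
  then obtain h where h: "h \<in> hom C (tgt C j) (src C b)" "cmp C h j = e" "cmp C (cmp C p b) h = v"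
    by (rule llpE[OF llp_j_pb, rotated 2]) (use eb_arr p_arr eb v in \<open>simp_all add: hom_iff\<close>)
  show "\<exists>h\<in>hom C (tgt C j) (src C p). cmp C h j = u \<and> cmp C p h = v"
  proof (intro bexI conjI)
    show "cmp C (cmp C b h) j = u"
      using h(1) eb_arr j_arr by (simp add: hom_iff cmp_assoc h(2) u_eq)
    show "cmp C p (cmp C b h) = v"
      using h(1) eb_arr p_arr by (simp add: hom_iff h(3) flip: cmp_assoc)
    show "cmp C b h \<in> hom C (tgt C j) (src C p)"
      using h(1) eb_arr by (simp add: hom_iff)
  qed
qed

lemma acyclic_fib_if_section:
  assumes fact: "factorization_condition C Cof Fib"
    and cylinders: "\<And>w. w \<in> Cof \<Longrightarrow> cofibrant C Cof (src C w) \<Longrightarrow> fibrant C Fib (tgt C w) \<Longrightarrow>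
      has_rel_strong_cylinder C Cof Fib w"
    and q: "q \<in> Fib" "cofibrant C Cof (tgt C q)" "fibrant C Fib (tgt C q)"
    and s: "s \<in> Cof" "s \<in> hom C (tgt C q) (src C q)" "cmp C q s = ident C (tgt C q)"
    and cancel: "\<And>c. c \<in> Cof \<Longrightarrow> src C c = src C q \<Longrightarrow> bifibrant C Cof Fib (tgt C c) \<Longrightarrow>
      acyclic_cof C Cof Fib (cmp C c s) \<Longrightarrow> acyclic_cof C Cof Fib c"
  shows "acyclic_fib C Cof Fib q"
proof -
  have qs: "q \<in> arr C" "s \<in> arr C" "src C s = tgt C q" "tgt C s = src C q"
    using q(1) s(2) Fib_arr by (simp_all add: hom_iff)
  have q_cofibrant: "cofibrant C Cof (src C q)"
    using cofibrant_tgt[OF _ s(1)] q(2) qs by simp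
  have q_fibrant: "fibrant C Fib (src C q)"
    using fibrant_src[OF q(3,1)] .
  obtain c a where c: "c \<in> Cof" and a: "acyclic_fib C Cof Fib a" and ca: "tgt C c = src C a"
    and q_eq: "q = cmp C a c"
    using fact qs(1) q_cofibrant q(3) unfolding factorization_condition_def by metis
  have ca_arr: "c \<in> arr C" "a \<in> arr C"
    using c a Cof_arr Fib_arr acyclic_fib_Fib by blast+
  then have ca_ends: "src C c = src C q" "tgt C a = tgt C q"
    using q_eq ca by simp_all
  have c_bifibrant: "bifibrant C Cof Fib (tgt C c)"
    unfolding bifibrant_def
    using cofibrant_tgt[OF _ c] fibrant_src[OF _ acyclic_fib_Fib[OF a]] q_cofibrant q(3) ca ca_arr ca_ends
    by simp
  have "acyclic_cof C Cof Fib (cmp C c s)"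
  proof (rule acyclic_cof_if_acyclic_fib_retraction)
    show "cmp C c s \<in> Cof"
      using Cof_cmp[OF s(1) c] qs ca_ends by simp
    show "cofibrant C Cof (src C (cmp C c s))" "has_rel_strong_cylinder C Cof Fib (cmp C c s)"
      using q(2) qs ca_arr ca_ends c_bifibrant \<open>cmp C c s \<in> Cof\<close> cylinders
      by (simp_all add: bifibrant_def)
    show "acyclic_fib C Cof Fib a" by fact
    show "a \<in> hom C (tgt C (cmp C c s)) (src C (cmp C c s))"
      using qs ca_arr ca_ends ca by (simp add: hom_iff)
    show "cmp C a (cmp C c s) = ident C (src C (cmp C c s))"
      using qs ca_arr ca_ends ca by (simp add: s(3) flip: cmp_assoc q_eq)
  qed
  then have "acyclic_cof C Cof Fib c"
    using cancel[OF c ca_ends(1) c_bifibrant] by blast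
  then show ?thesis
    using acyclic_fib_if_factorization[OF q(1) q_fibrant q(3) _ a ca q_eq] by blast
qed

end

definition has_rel_strong_path_objects :: "('o, 'm) cat \<Rightarrow> 'm set \<Rightarrow> 'm set \<Rightarrow> bool" where
  "has_rel_strong_path_objects C Cof Fib \<longleftrightarrow>
     (\<forall>p\<in>Fib. cofibrant C Cof (src C p) \<and> fibrant C Fib (tgt C p) \<longrightarrow>
        has_rel_strong_path C Cof Fib p)"

definition has_fibration_factorizations :: "('o, 'm) cat \<Rightarrow> 'm set \<Rightarrow> 'm set \<Rightarrow> 'm set \<Rightarrow> bool" where
  "has_fibration_factorizations C Cof Fib J \<longleftrightarrow>
     (\<forall>f\<in>arr C. cofibrant C Cof (src C f) \<and> fibrant C Fib (tgt C f) \<longrightarrow>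
        (\<exists>j q. j \<in> J \<and> q \<in> Fib \<and> tgt C j = src C q \<and> f = cmp C q j))"

definition acyclic_cof_cancellation :: "('o, 'm) cat \<Rightarrow> 'm set \<Rightarrow> 'm set \<Rightarrow> 'm set \<Rightarrow> bool" where
  "acyclic_cof_cancellation C Cof Fib J \<longleftrightarrow>
     (\<forall>i j. i \<in> J \<and> j \<in> Cof \<and> tgt C i = src C j \<and>
        bifibrant C Cof Fib (src C i) \<and> bifibrant C Cof Fib (tgt C i) \<and>
        bifibrant C Cof Fib (tgt C j) \<and> acyclic_cof C Cof Fib (cmp C j i) \<longrightarrow>
        acyclic_cof C Cof Fib j)"

context cof_fib_category
begin

lemma acyclic_cof_if_comp_acyclic:
  assumes fact: "factorization_condition C Cof Fib"
    and paths: "has_rel_strong_path_objects C Cof Fib"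
    and i: "acyclic_cof C Cof Fib i"
    and j: "j \<in> Cof" "tgt C i = src C j" "cofibrant C Cof (src C j)" "cofibrant C Cof (tgt C j)"
    and ji: "acyclic_cof C Cof Fib (cmp C j i)"
  shows "acyclic_cof C Cof Fib j"
  unfolding acyclic_cof_def
proof (intro conjI ballI impI)
  show "j \<in> Cof" by fact
  have "llp C j p'" if "p' \<in> Fib" "cofibrant C Cof (src C p')"
    "fibrant C Fib (src C p')" "fibrant C Fib (tgt C p')" for p'
    using that paths unfolding has_rel_strong_path_objects_def
    by (intro llp_if_rel_strong_path[OF _ _ _ _ i j ji]) simp_all
  then show "llp C j p" if "p \<in> Fib" "fibrant C Fib (src C p) \<and> fibrant C Fib (tgt C p)" for p
    using that llp_if_llp_cofibrant_domain[OF fact j(1,3)] by simp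
qed

lemma acyclic_cof_cancellation_if_path_objects:
  assumes "factorization_condition C Cof Fib" "has_rel_strong_path_objects C Cof Fib"
  shows "acyclic_cof_cancellation C Cof Fib {i. acyclic_cof C Cof Fib i}"
  unfolding acyclic_cof_cancellation_def
proof (intro allI impI, elim conjE)
  fix i j
  assume i: "i \<in> {i. acyclic_cof C Cof Fib i}" and j: "j \<in> Cof" "tgt C i = src C j"
    and bifibrant: "bifibrant C Cof Fib (tgt C i)" "bifibrant C Cof Fib (tgt C j)"
    and ji: "acyclic_cof C Cof Fib (cmp C j i)"
  have "cofibrant C Cof (src C j)" "cofibrant C Cof (tgt C j)"
    using bifibrant j(2) unfolding bifibrant_def by simp_all
  moreover have "acyclic_cof C Cof Fib i"
    using i by simp
  ultimately show "acyclic_cof C Cof Fib j"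
    using acyclic_cof_if_comp_acyclic[OF assms _ j _ _ ji] by blast
qed

lemma diagonal_factorization:
  assumes J: "J \<subseteq> Cof" "has_fibration_factorizations C Cof Fib J"
    and p: "p \<in> Fib" "cofibrant C Cof (src C p)" "fibrant C Fib (tgt C p)"
  obtains pr1 pr2 s k where "is_pullback C p p pr2 pr1" "pr1 \<in> Fib" "s \<in> J" "src C s = src C p"
    "k \<in> Fib" "tgt C s = src C k" "tgt C k = src C pr1"
    "cmp C pr1 (cmp C k s) = ident C (src C p)" "cmp C pr2 (cmp C k s) = ident C (src C p)"
proof -
  have p_arr: "p \<in> arr C" and p_fibrant: "fibrant C Fib (src C p)"
    using p Fib_arr fibrant_src by simp_all
  obtain pr2 pr1 where pb: "is_pullback C p p pr2 pr1"
    using fibration_pullback_exists[OF p(1) p_arr refl p(3) p_fibrant] .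
  have pr1: "pr1 \<in> Fib"
    using fibration_pullback[OF pullback_swap[OF pb] p(1) p_arr refl p(3) p_fibrant] .
  have pr: "pr1 \<in> hom C (src C pr1) (src C p)" "pr2 \<in> hom C (src C pr1) (src C p)"
    using pb unfolding is_pullback_def by (auto simp: hom_iff)
  have id: "ident C (src C p) \<in> hom C (src C p) (src C p)"
    using p_arr by (simp add: hom_iff)
  obtain \<delta> where \<delta>: "\<delta> \<in> hom C (src C p) (src C pr2)"
    "cmp C pr1 \<delta> = ident C (src C p)" "cmp C pr2 \<delta> = ident C (src C p)"
    using pullbackE[OF pb id id refl] .
  have \<delta>_arr: "\<delta> \<in> arr C" "src C \<delta> = src C p" "tgt C \<delta> = src C pr1"
    using \<delta>(1) pr by (simp_all add: hom_iff)
  have "fibrant C Fib (tgt C \<delta>)"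
    using fibrant_src[OF _ pr1] p_fibrant pr \<delta>_arr by (simp add: hom_iff)
  then have "\<exists>s k. s \<in> J \<and> k \<in> Fib \<and> tgt C s = src C k \<and> \<delta> = cmp C k s"
    using J(2)[unfolded has_fibration_factorizations_def, rule_format, OF \<delta>_arr(1)] p(2) \<delta>_arr(2)
    by simp
  then obtain s k where s: "s \<in> J" and k: "k \<in> Fib" "tgt C s = src C k" and \<delta>_eq: "\<delta> = cmp C k s"
    by blast
  have "s \<in> arr C" "k \<in> arr C"
    using s k J(1) Cof_arr Fib_arr by blast+
  then show thesis
    using that[OF pb pr1 s _ k(1) k(2)] \<delta> \<delta>_arr \<delta>_eq k(2) by simp
qed

lemma has_rel_strong_path_objects_if_cancellation:
  assumes fact: "factorization_condition C Cof Fib"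
    and cylinders: "\<And>w. w \<in> Cof \<Longrightarrow> cofibrant C Cof (src C w) \<Longrightarrow> fibrant C Fib (tgt C w) \<Longrightarrow>
      has_rel_strong_cylinder C Cof Fib w"
    and J: "\<forall>j\<in>J. acyclic_cof C Cof Fib j" "has_fibration_factorizations C Cof Fib J"
      "acyclic_cof_cancellation C Cof Fib J"
  shows "has_rel_strong_path_objects C Cof Fib"
  unfolding has_rel_strong_path_objects_def
proof (intro ballI impI, elim conjE)
  fix p
  assume p: "p \<in> Fib" "cofibrant C Cof (src C p)" "fibrant C Fib (tgt C p)"
  have "J \<subseteq> Cof"
    using J(1) acyclic_cof_Cof by blast
  then obtain pr1 pr2 s k where pb: "is_pullback C p p pr2 pr1" and pr1: "pr1 \<in> Fib"
    and s: "s \<in> J" "src C s = src C p" and k: "k \<in> Fib" "tgt C s = src C k" "tgt C k = src C pr1"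
    and ks: "cmp C pr1 (cmp C k s) = ident C (src C p)" "cmp C pr2 (cmp C k s) = ident C (src C p)"
    by (rule diagonal_factorization[OF _ J(2) p])
  have "pr1 \<in> hom C (src C pr2) (src C p)"
    using pb unfolding is_pullback_def by blast
  moreover have "s \<in> Cof"
    using s(1) \<open>J \<subseteq> Cof\<close> by blast
  ultimately have arrs: "s \<in> Cof" "s \<in> arr C" "k \<in> arr C" "pr1 \<in> arr C" "tgt C pr1 = src C p"
    using k(1) Cof_arr Fib_arr by (simp_all add: hom_iff)
  have p_fibrant: "fibrant C Fib (src C p)"
    using fibrant_src[OF p(3,1)] .
  have "acyclic_fib C Cof Fib (cmp C pr1 k)"
  proof (rule acyclic_fib_if_section[OF fact cylinders])
    show q: "cmp C pr1 k \<in> Fib"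
      using Fib_cmp[OF k(1) pr1] k(3) by simp
    show "cofibrant C Cof (tgt C (cmp C pr1 k))" "fibrant C Fib (tgt C (cmp C pr1 k))"
      using p(2) p_fibrant arrs k(3) by simp_all
    show "s \<in> Cof" "s \<in> hom C (tgt C (cmp C pr1 k)) (src C (cmp C pr1 k))"
      using arrs s(2) k by (simp_all add: hom_iff)
    show "cmp C (cmp C pr1 k) s = ident C (tgt C (cmp C pr1 k))"
      using arrs k by (simp add: cmp_assoc ks(1))
    have s_bifibrant: "bifibrant C Cof Fib (src C s)" "bifibrant C Cof Fib (tgt C s)"
      unfolding bifibrant_def
      using p(2) p_fibrant cofibrant_tgt[OF _ arrs(1)] fibrant_src[OF _ q] arrs s(2) k
      by simp_all
    show "acyclic_cof C Cof Fib c"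
      if "c \<in> Cof" "src C c = src C (cmp C pr1 k)" "bifibrant C Cof Fib (tgt C c)"
        "acyclic_cof C Cof Fib (cmp C c s)" for c
      by (rule J(3)[unfolded acyclic_cof_cancellation_def, rule_format, of s c])
        (use s(1) s_bifibrant that arrs k in simp)
  qed
  then show "has_rel_strong_path C Cof Fib p"
    unfolding has_rel_strong_path_def
    using pb arrs s k ks by (intro exI[of _ pr1] exI[of _ pr2] exI[of _ s] exI[of _ k])
      (simp add: hom_iff)
qed

lemma has_rel_strong_path_objects_iff:
  assumes fact: "factorization_condition C Cof Fib"
    and cylinders: "\<And>w. w \<in> Cof \<Longrightarrow> cofibrant C Cof (src C w) \<Longrightarrow> fibrant C Fib (tgt C w) \<Longrightarrow>
      has_rel_strong_cylinder C Cof Fib w"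
  shows "has_rel_strong_path_objects C Cof Fib \<longleftrightarrow>
      acyclic_cof_cancellation C Cof Fib {i. acyclic_cof C Cof Fib i}"
    and "has_rel_strong_path_objects C Cof Fib \<longleftrightarrow>
      (\<exists>J. (\<forall>j\<in>J. acyclic_cof C Cof Fib j) \<and>
        has_fibration_factorizations C Cof Fib J \<and> acyclic_cof_cancellation C Cof Fib J)"
proof -
  have factorizations: "has_fibration_factorizations C Cof Fib {i. acyclic_cof C Cof Fib i}"
    using fact unfolding factorization_condition_def has_fibration_factorizations_def by simp
  show "has_rel_strong_path_objects C Cof Fib \<longleftrightarrow>
      acyclic_cof_cancellation C Cof Fib {i. acyclic_cof C Cof Fib i}"
    using acyclic_cof_cancellation_if_path_objects[OF fact]
      has_rel_strong_path_objects_if_cancellation[OF fact cylinders _ factorizations]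
    by auto
  show "has_rel_strong_path_objects C Cof Fib \<longleftrightarrow>
      (\<exists>J. (\<forall>j\<in>J. acyclic_cof C Cof Fib j) \<and>
        has_fibration_factorizations C Cof Fib J \<and> acyclic_cof_cancellation C Cof Fib J)"
    using acyclic_cof_cancellation_if_path_objects[OF fact] factorizations
      has_rel_strong_path_objects_if_cancellation[OF fact cylinders]
    by auto
qed

end

theorem proposition2p3p3:
  fixes C :: "('o, 'm) cat" and Cof Fib :: "'m set"
  assumes cat: "is_category C"
    and cof: "cofibration_class C Cof"
    and fib: "fibration_class C Fib"
    and fact: "factorization_condition C Cof Fib"
    and cyl: "\<forall>i\<in>Cof. cofibrant C Cof (src C i) \<and> fibrant C Fib (tgt C i) \<longrightarrow>
                has_rel_strong_cylinder C Cof Fib i"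
  shows "((\<forall>p\<in>Fib. cofibrant C Cof (src C p) \<and> fibrant C Fib (tgt C p) \<longrightarrow>
              has_rel_strong_path C Cof Fib p)
          \<longleftrightarrow>
          (\<forall>i j. i \<in> Cof \<and> j \<in> Cof \<and> tgt C i = src C j \<and>
              bifibrant C Cof Fib (src C i) \<and> bifibrant C Cof Fib (tgt C i) \<and>
              bifibrant C Cof Fib (tgt C j) \<and>
              acyclic_cof C Cof Fib i \<and> acyclic_cof C Cof Fib (cmp C j i) \<longrightarrow>
              acyclic_cof C Cof Fib j))
       \<and>
         ((\<forall>p\<in>Fib. cofibrant C Cof (src C p) \<and> fibrant C Fib (tgt C p) \<longrightarrow>
              has_rel_strong_path C Cof Fib p)
          \<longleftrightarrow>
          (\<exists>J. (\<forall>j\<in>J. acyclic_cof C Cof Fib j) \<and>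
              (\<forall>f\<in>arr C. cofibrant C Cof (src C f) \<and> fibrant C Fib (tgt C f) \<longrightarrow>
                 (\<exists>j q. j \<in> J \<and> q \<in> Fib \<and> tgt C j = src C q \<and> f = cmp C q j)) \<and>
              (\<forall>i j. i \<in> J \<and> j \<in> Cof \<and> tgt C i = src C j \<and>
                 bifibrant C Cof Fib (src C i) \<and> bifibrant C Cof Fib (tgt C i) \<and>
                 bifibrant C Cof Fib (tgt C j) \<and>
                 acyclic_cof C Cof Fib (cmp C j i) \<longrightarrow>
                 acyclic_cof C Cof Fib j)))"
    (is "(?paths \<longleftrightarrow> ?cancel) \<and> (?paths \<longleftrightarrow> ?cancel_J)")
proof -
  interpret cof_fib_category C Cof Fib
    using cat cof fib by unfold_locales
  have cylinders: "\<And>w. w \<in> Cof \<Longrightarrow> cofibrant C Cof (src C w) \<Longrightarrow> fibrant C Fib (tgt C w) \<Longrightarrow>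
      has_rel_strong_cylinder C Cof Fib w"
    using cyl by blast
  have "?paths \<longleftrightarrow> has_rel_strong_path_objects C Cof Fib"
    by (simp only: has_rel_strong_path_objects_def)
  moreover have "?cancel \<longleftrightarrow> acyclic_cof_cancellation C Cof Fib {i. acyclic_cof C Cof Fib i}"
    unfolding acyclic_cof_cancellation_def mem_Collect_eq using acyclic_cof_Cof by blast
  moreover have "?cancel_J \<longleftrightarrow> (\<exists>J. (\<forall>j\<in>J. acyclic_cof C Cof Fib j) \<and>
      has_fibration_factorizations C Cof Fib J \<and> acyclic_cof_cancellation C Cof Fib J)"
    by (simp only: has_fibration_factorizations_def acyclic_cof_cancellation_def)
  ultimately show ?thesis
    using has_rel_strong_path_objects_iff[OF fact cylinders] by (simp only:)
qed

end
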